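(* In the standard LLP setup, for every $N\ge1$ and every $s\in\Sigma^*$: $f^N_{cons}(s)\subseteq f^{N+1}_{cons}(s)$.
   Context: Standard LLP setup. $\Sigma=\Sigma_c\,\dot\cup\,\Sigma_{uc}$ is a finite alphabet partitioned into controllable and uncontrollable events. The plant $G$ has generated language $L(G)$ and marked language $L_m(G)$ with $L(G)=\overline{L_m(G)}$ ($\overline{M}$ = set of prefixes of strings in $M$). The legal language $K\subseteq L_m(G)$ satisfies $K=\overline{K}\cap L_m(G)$. For a prefix-closed $L$, $M$ is controllable w.r.t. $L$ if $\overline{M}\Sigma_{uc}\cap L\subseteq\overline{M}$. For a language $L$ and $s\in\Sigma^*$: $L/s=\{t: st\in L\}$; $L|_N=\{t\in L:|t|\le N\}$. $M^{\uparrow/s|_N}$ is the supremal sublanguage of $M$ controllable w.r.t. $L(G)/s|_N$. Conservative attitude: $f^N_{cons}(s)=[K/s|_{N-1}]^{\uparrow/s|_N}$. *)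

theory Defs
  imports Main
begin

definition pre :: "'e list set \<Rightarrow> 'e list set" where
  "pre M = {t. \<exists>u. t @ u \<in> M}"

definition lquot :: "'e list set \<Rightarrow> 'e list \<Rightarrow> 'e list set" where
  "lquot L s = {t. s @ t \<in> L}"

definition trunc :: "'e list set \<Rightarrow> nat \<Rightarrow> 'e list set" where
  "trunc L N = {t \<in> L. length t \<le> N}"

definition controllable :: "'e set \<Rightarrow> 'e list set \<Rightarrow> 'e list set \<Rightarrow> bool" where
  "controllable Suc_set M L \<longleftrightarrow>
     {t @ [\<sigma>] | t \<sigma>. t \<in> pre M \<and> \<sigma> \<in> Suc_set} \<inter> L \<subseteq> pre M"

definition supC :: "'e set \<Rightarrow> 'e list set \<Rightarrow> 'e list set \<Rightarrow> 'e list set" where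
  "supC Suc_set M L = \<Union> {M'. M' \<subseteq> M \<and> controllable Suc_set M' L}"

definition f_cons :: "'e set \<Rightarrow> 'e list set \<Rightarrow> 'e list set \<Rightarrow> nat \<Rightarrow> 'e list \<Rightarrow> 'e list set" where
  "f_cons Suc_set LG K N s = supC Suc_set (trunc (lquot K s) (N - 1)) (trunc (lquot LG s) N)"

end

theory Submission
  imports Defs
begin

text \<open>Controllability of a language whose strings have length at most n only inspects the
  one-event extensions of its prefixes, i.e. strings of length at most n + 1. Hence
  truncating the plant language at any horizon beyond n does not change it, and enlarging
  the horizon from N to N + 1 only enlarges the legal sublanguage K/s|_(N-1) being
  controlled, so the supremal controllable sublanguage can only grow.\<close>

lemma trunc_mono: "n \<le> m \<Longrightarrow> trunc L n \<subseteq> trunc L m"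
  unfolding trunc_def by auto

lemma trunc_trunc: "trunc (trunc L m) n = trunc L (min m n)"
  unfolding trunc_def by auto

lemma length_le_if_in_pre:
  assumes "\<forall>u\<in>M. length u \<le> n" and "t \<in> pre M"
  shows "length t \<le> n"
  using assms unfolding pre_def by fastforce

lemma controllable_iff_trunc:
  assumes "\<forall>u\<in>M. length u \<le> n"
  shows "controllable S M L \<longleftrightarrow> controllable S M (trunc L (Suc n))"
proof -
  have "{t @ [\<sigma>] | t \<sigma>. t \<in> pre M \<and> \<sigma> \<in> S} \<inter> L
      = {t @ [\<sigma>] | t \<sigma>. t \<in> pre M \<and> \<sigma> \<in> S} \<inter> trunc L (Suc n)"
    using length_le_if_in_pre[OF assms] unfolding trunc_def by fastforce
  then show ?thesis unfolding controllable_def by simp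
qed

lemma controllable_trunc_horizon:
  assumes "\<forall>u\<in>M. length u \<le> n" and "Suc n \<le> m" and "Suc n \<le> m'"
  shows "controllable S M (trunc L m) \<longleftrightarrow> controllable S M (trunc L m')"
proof -
  have "controllable S M (trunc L k) \<longleftrightarrow> controllable S M (trunc L (Suc n))"
    if "Suc n \<le> k" for k
    using controllable_iff_trunc[OF assms(1), of S "trunc L k"] that
    by (simp add: trunc_trunc min_absorb2)
  then show ?thesis using assms(2,3) by blast
qed

lemma supC_mono:
  assumes "M \<subseteq> M'"
    and "\<And>X. X \<subseteq> M \<Longrightarrow> controllable S X L \<Longrightarrow> controllable S X L'"
  shows "supC S M L \<subseteq> supC S M' L'"
  unfolding supC_def using assms by blast

lemma supC_trunc_mono:
  assumes "Suc n \<le> m" and "m \<le> m'"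
  shows "supC S (trunc K n) (trunc L m) \<subseteq> supC S (trunc K (m' - 1)) (trunc L m')"
proof (rule supC_mono)
  show "trunc K n \<subseteq> trunc K (m' - 1)"
    using assms by (intro trunc_mono) simp
  fix X assume "X \<subseteq> trunc K n" and "controllable S X (trunc L m)"
  moreover from \<open>X \<subseteq> trunc K n\<close> have "\<forall>u\<in>X. length u \<le> n"
    unfolding trunc_def by auto
  ultimately show "controllable S X (trunc L m')"
    using controllable_trunc_horizon assms by (metis le_trans)
qed

theorem mainTheorem7:
  fixes Sigma_uc :: "('e::finite) set"
    and Lm LG K :: "'e list set"
    and N :: nat and s :: "'e list"
  assumes "LG = pre Lm"
    and "K \<subseteq> Lm"
    and "K = pre K \<inter> Lm"
    and "N \<ge> 1"
  shows "f_cons Sigma_uc LG K N s \<subseteq> f_cons Sigma_uc LG K (N + 1) s"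
  unfolding f_cons_def
  using supC_trunc_mono[of "N - 1" N "N + 1"] \<open>N \<ge> 1\<close> by simp

end
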